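(* Suppose a cube is inscribed in the unit sphere in $\mathbb{R}^3$ in such a way that two of its vertices lie at $(0,0,\pm1)$. Then the stereographic projection $S(x,y,z)=\frac{x}{1-z}+i\frac{y}{1-z}$ sends the remaining six vertices to the three vertices and the three midpoints of the sides of an equilateral triangle in $\mathbb{C}$. *)

theory Defs
  imports "HOL-Analysis.Analysis"
begin

definition cube_vertices :: "real^3 \<Rightarrow> real \<Rightarrow> real^3 \<Rightarrow> real^3 \<Rightarrow> real^3 \<Rightarrow> (real^3) set" where
  "cube_vertices c s u v w =
     {c + s *\<^sub>R (a *\<^sub>R u + b *\<^sub>R v + d *\<^sub>R w) | a b d.
        a \<in> {-1, 1} \<and> b \<in> {-1, 1} \<and> d \<in> {-1, 1}}"

definition is_cube :: "(real^3) set \<Rightarrow> bool" where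
  "is_cube V \<longleftrightarrow> (\<exists>c s u v w. s > 0 \<and> norm u = 1 \<and> norm v = 1 \<and> norm w = 1 \<and>
      inner u v = 0 \<and> inner v w = 0 \<and> inner u w = 0 \<and> V = cube_vertices c s u v w)"

definition stereo :: "real^3 \<Rightarrow> complex" where
  "stereo p = Complex (p$1 / (1 - p$3)) (p$2 / (1 - p$3))"

definition equilateral :: "complex \<Rightarrow> complex \<Rightarrow> complex \<Rightarrow> bool" where
  "equilateral a b c \<longleftrightarrow> a \<noteq> b \<and> dist a b = dist b c \<and> dist b c = dist c a"

end

theory Submission
  imports Defs
begin

text \<open>Comparing the norms of adjacent vertices shows that the centre of an inscribed cube is
  orthogonal to all three edge directions, so the cube is centred at the origin and its half
  side \<open>s\<close> satisfies \<open>3 s\<^sup>2 = 1\<close>.  Orienting the edge directions \<open>u, v, w\<close> so that the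
  north pole is \<open>s (u + v + w)\<close>, the six remaining vertices are \<open>\<plusminus>p\<^sub>i\<close> with
  \<open>p\<^sub>1 = s (-u + v + w)\<close> etc.  Each \<open>p\<^sub>i\<close> has height \<open>\<langle>p\<^sub>i, s (u + v + w)\<rangle> = s\<^sup>2 = 1/3\<close>,
  so stereographic projection scales its horizontal part by \<open>3/2\<close>, while \<open>-p\<^sub>i\<close> is scaled
  by \<open>-3/4\<close>.  The \<open>p\<^sub>i\<close> are pairwise equidistant at a common height, and their horizontal
  parts sum to zero because \<open>p\<^sub>1 + p\<^sub>2 + p\<^sub>3\<close> is the north pole; hence the images of the
  \<open>-p\<^sub>i\<close> are the midpoints of the equilateral triangle formed by the images of the \<open>p\<^sub>i\<close>.\<close>

definition horiz :: "real^3 \<Rightarrow> complex" where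
  "horiz p = Complex (p$1) (p$2)"

lemma horiz_add [simp]: "horiz (p + q) = horiz p + horiz q"
  and horiz_uminus [simp]: "horiz (- p) = - horiz p"
  by (simp_all add: horiz_def complex_eq_iff)

lemma stereo_eq_horiz_divide: "stereo p = horiz p / complex_of_real (1 - p$3)"
  by (simp add: stereo_def horiz_def complex_eq_iff)

lemma norm_sq_vec3: "(norm (x::real^3))\<^sup>2 = (x$1)\<^sup>2 + (x$2)\<^sup>2 + (x$3)\<^sup>2"
  unfolding power2_norm_eq_inner by (simp add: inner_vec_def sum_3 power2_eq_square)

lemma dist_horiz_same_height:
  assumes "p$3 = q$3"
  shows "dist (horiz p) (horiz q) = dist p q"
proof -
  have "(dist (horiz p) (horiz q))\<^sup>2 = (dist p q)\<^sup>2"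
    using assms by (simp add: dist_norm horiz_def cmod_power2 norm_sq_vec3)
  then show ?thesis by simp
qed

lemma equilateral_mult:
  assumes "equilateral a b c" "k \<noteq> 0"
  shows "equilateral (k * a) (k * b) (k * c)"
proof -
  have "dist (k * x) (k * y) = norm k * dist x y" for x y
    by (simp add: dist_norm flip: norm_mult right_diff_distrib)
  then show ?thesis using assms by (simp add: equilateral_def)
qed

lemma stereo_image_triangle_one_third:
  fixes p1 p2 p3 :: "real^3"
  assumes height: "p1$3 = 1/3" "p2$3 = 1/3" "p3$3 = 1/3"
    and balanced: "horiz p1 + horiz p2 + horiz p3 = 0"
    and "p1 \<noteq> p2" "dist p1 p2 = dist p2 p3" "dist p2 p3 = dist p3 p1"
  shows "\<exists>a b c. equilateral a b c \<and>
           stereo ` {p1, p2, p3, -p1, -p2, -p3} = {a, b, c, (a + b) / 2, (b + c) / 2, (c + a) / 2}"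
proof (intro exI conjI)
  define k :: complex where "k = 3/2"
  have "horiz p1 \<noteq> horiz p2"
    using \<open>p1 \<noteq> p2\<close> height by (simp add: horiz_def vec_eq_iff forall_3)
  then have "equilateral (horiz p1) (horiz p2) (horiz p3)"
    using assms by (simp add: equilateral_def dist_horiz_same_height)
  then show "equilateral (k * horiz p1) (k * horiz p2) (k * horiz p3)"
    by (rule equilateral_mult) (simp add: k_def)
  have stereo_pos: "stereo p = k * horiz p" if "p$3 = 1/3" for p
    by (simp add: stereo_eq_horiz_divide k_def that field_simps)
  have stereo_neg: "stereo (- p) = - k * horiz p / 2" if "p$3 = 1/3" for p
    by (simp add: stereo_eq_horiz_divide k_def that field_simps)
  have sum: "k * horiz p1 + k * horiz p2 + k * horiz p3 = 0"
    using balanced by (simp flip: distrib_left)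
  have "stereo (- p1) = (k * horiz p2 + k * horiz p3) / 2"
    "stereo (- p2) = (k * horiz p3 + k * horiz p1) / 2"
    "stereo (- p3) = (k * horiz p1 + k * horiz p2) / 2"
    using sum by (simp_all add: stereo_neg height field_simps) algebra+
  then show "stereo ` {p1, p2, p3, -p1, -p2, -p3} =
    {k * horiz p1, k * horiz p2, k * horiz p3, (k * horiz p1 + k * horiz p2) / 2,
     (k * horiz p2 + k * horiz p3) / 2, (k * horiz p3 + k * horiz p1) / 2}"
    using stereo_pos height by auto
qed

definition orthonormal_triple :: "'a::real_inner \<Rightarrow> 'a \<Rightarrow> 'a \<Rightarrow> bool" where
  "orthonormal_triple u v w \<longleftrightarrow> norm u = 1 \<and> norm v = 1 \<and> norm w = 1 \<and>
     inner u v = 0 \<and> inner v w = 0 \<and> inner u w = 0"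

lemma is_cube_iff:
  "is_cube V \<longleftrightarrow>
     (\<exists>c s u v w. s > 0 \<and> orthonormal_triple u v w \<and> V = cube_vertices c s u v w)"
  by (simp add: is_cube_def orthonormal_triple_def)

lemma orthonormal_triple_scaleR_signs:
  assumes "orthonormal_triple u v w" "a \<in> {-1, 1}" "b \<in> {-1, 1}" "d \<in> {-1, 1}"
  shows "orthonormal_triple (a *\<^sub>R u) (b *\<^sub>R v) (d *\<^sub>R w)"
  using assms by (auto simp: orthonormal_triple_def)

lemma orthonormal_tripleD:
  assumes "orthonormal_triple u v w"
  shows "inner u u = 1" "inner v v = 1" "inner w w = 1"
    "inner u v = 0" "inner v w = 0" "inner u w = 0"
    "inner v u = 0" "inner w v = 0" "inner w u = 0"
  using assms by (simp_all add: orthonormal_triple_def inner_commute flip: power2_norm_eq_inner)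

lemma norm_diff_orthonormal:
  fixes u v :: "'a::real_inner"
  assumes "inner u u = 1" "inner v v = 1" "inner u v = 0"
  shows "norm (u - v) = sqrt 2"
proof -
  have "(norm (u - v))\<^sup>2 = 2"
    using assms by (simp add: power2_norm_eq_inner inner_diff inner_commute)
  then show ?thesis by (simp add: real_sqrt_unique)
qed

lemma orthogonal_orthonormal_triple_imp_zero:
  fixes c :: "real^3"
  assumes "orthonormal_triple u v w" "inner c u = 0" "inner c v = 0" "inner c w = 0"
  shows "c = 0"
proof (rule ccontr)
  assume "c \<noteq> 0"
  have "pairwise orthogonal {u, v, w, c}" "0 \<notin> {u, v, w, c}"
    using assms \<open>c \<noteq> 0\<close>
    by (auto simp: pairwise_def orthogonal_def orthonormal_triple_def inner_commute)
  then have "card {u, v, w, c} \<le> 3"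
    using pairwise_orthogonal_independent independent_bound by fastforce
  moreover have "u \<noteq> v" "u \<noteq> w" "v \<noteq> w" "u \<noteq> c" "v \<noteq> c" "w \<noteq> c"
    using assms(2-4) orthonormal_tripleD[OF assms(1)] by auto
  then have "card {u, v, w, c} = 4" by simp
  ultimately show False by linarith
qed

lemma cube_vertices_eq_image:
  "cube_vertices c s u v w =
     (\<lambda>(a, b, d). c + s *\<^sub>R (a *\<^sub>R u + b *\<^sub>R v + d *\<^sub>R w)) ` ({-1, 1} \<times> {-1, 1} \<times> {-1, 1})"
  unfolding cube_vertices_def image_def by (auto simp: Bex_def)

lemma cube_vertices_centred:
  "cube_vertices 0 s u v w =
     {s *\<^sub>R (u + v + w), s *\<^sub>R (-u + v + w), s *\<^sub>R (u - v + w), s *\<^sub>R (u + v - w),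
      -(s *\<^sub>R (u + v + w)), -(s *\<^sub>R (-u + v + w)), -(s *\<^sub>R (u - v + w)), -(s *\<^sub>R (u + v - w))}"
proof -
  have signs: "{-1, 1::real} \<times> {-1, 1} \<times> {-1, 1} =
    {(1, 1, 1), (-1, 1, 1), (1, -1, 1), (1, 1, -1), (-1, -1, -1), (1, -1, -1), (-1, 1, -1), (-1, -1, 1)}"
    by (simp add: insert_commute)
  show ?thesis
    unfolding cube_vertices_eq_image signs image_insert image_empty
    by (simp only: prod.case add_0_left scaleR_one scaleR_minus_left diff_conv_add_uminus
        minus_add_distrib minus_minus flip: scaleR_minus_right)
qed

lemma cube_vertices_scaleR_signs:
  assumes "a0 \<in> {-1, 1}" "b0 \<in> {-1, 1}" "d0 \<in> {-1, 1}"
  shows "cube_vertices c s (a0 *\<^sub>R u) (b0 *\<^sub>R v) (d0 *\<^sub>R w) = cube_vertices c s u v w"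
proof -
  have sub: "cube_vertices c s (a0 *\<^sub>R u) (b0 *\<^sub>R v) (d0 *\<^sub>R w) \<subseteq> cube_vertices c s u v w"
    if "a0 \<in> {-1, 1}" "b0 \<in> {-1, 1}" "d0 \<in> {-1, 1}" for a0 b0 d0 u v w
  proof
    fix x assume "x \<in> cube_vertices c s (a0 *\<^sub>R u) (b0 *\<^sub>R v) (d0 *\<^sub>R w)"
    then obtain a b d where signs: "a \<in> {-1, 1}" "b \<in> {-1, 1}" "d \<in> {-1, 1}"
      and "x = c + s *\<^sub>R ((a * a0) *\<^sub>R u + (b * b0) *\<^sub>R v + (d * d0) *\<^sub>R w)"
      unfolding cube_vertices_def by auto
    moreover have "a * a0 \<in> {-1, 1}" "b * b0 \<in> {-1, 1}" "d * d0 \<in> {-1, 1}"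
      using signs that by auto
    ultimately show "x \<in> cube_vertices c s u v w"
      unfolding cube_vertices_def by blast
  qed
  have "cube_vertices c s u v w \<subseteq> cube_vertices c s (a0 *\<^sub>R u) (b0 *\<^sub>R v) (d0 *\<^sub>R w)"
    using sub[OF assms, of "a0 *\<^sub>R u" "b0 *\<^sub>R v" "d0 *\<^sub>R w"] assms by auto
  then show ?thesis using sub[OF assms] by blast
qed

lemma norm_sq_cube_vertex:
  assumes "orthonormal_triple u v w" "a \<in> {-1, 1}" "b \<in> {-1, 1}" "d \<in> {-1, 1}"
  shows "(norm (c + s *\<^sub>R (a *\<^sub>R u + b *\<^sub>R v + d *\<^sub>R w)))\<^sup>2 =
           (norm c)\<^sup>2 + 2 * s * (a * inner c u + b * inner c v + d * inner c w) + 3 * s\<^sup>2"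
proof -
  define y where "y = a *\<^sub>R u + b *\<^sub>R v + d *\<^sub>R w"
  have "inner y y = 3"
    using assms orthonormal_tripleD[OF assms(1)] by (auto simp: y_def inner_add)
  then have "(norm (c + s *\<^sub>R y))\<^sup>2 = (norm c)\<^sup>2 + 2 * s * inner c y + 3 * s\<^sup>2"
    unfolding power2_norm_eq_inner
    by (simp add: inner_add inner_commute algebra_simps flip: power2_eq_square)
  then show ?thesis by (simp add: y_def inner_add_right)
qed

lemma inscribed_cube_centre_radius:
  fixes c u v w :: "real^3"
  assumes "s > 0" "orthonormal_triple u v w" "cube_vertices c s u v w \<subseteq> sphere 0 1"
  shows "c = 0" "3 * s\<^sup>2 = 1"
proof -
  have vertex: "(norm c)\<^sup>2 + 2 * a * (s * inner c u) + 2 * b * (s * inner c v)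
                  + 2 * d * (s * inner c w) + 3 * s\<^sup>2 = 1"
    if signs: "a \<in> {-1, 1}" "b \<in> {-1, 1}" "d \<in> {-1, 1}" for a b d
  proof -
    have "c + s *\<^sub>R (a *\<^sub>R u + b *\<^sub>R v + d *\<^sub>R w) \<in> sphere 0 1"
      using assms(3) signs unfolding cube_vertices_def by blast
    then show ?thesis
      using norm_sq_cube_vertex[OF assms(2) signs, of c s] by (simp add: algebra_simps)
  qed
  have "s * inner c u = 0" "s * inner c v = 0" "s * inner c w = 0"
    using vertex[of 1 1 1, simplified] vertex[of "-1" "-1" "-1", simplified]
      vertex[of "-1" 1 1, simplified] vertex[of 1 "-1" 1, simplified] vertex[of 1 1 "-1", simplified]
    by linarith+
  with \<open>s > 0\<close> show "c = 0"
    by (intro orthogonal_orthonormal_triple_imp_zero[OF assms(2)]) simp_all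
  with vertex[of 1 1 1] show "3 * s\<^sup>2 = 1" by simp
qed

lemma inner_vector_0_0_1: "inner (x::real^3) (vector [0, 0, 1]) = x$3"
  by (simp add: inner_vec_def sum_3)

lemma horiz_vector_0_0_1 [simp]: "horiz (vector [0, 0, 1]) = 0"
  by (simp add: horiz_def complex_eq_iff)

lemma stereo_cube_with_pole:
  fixes u v w :: "real^3"
  assumes orth: "orthonormal_triple u v w" and "3 * s\<^sup>2 = 1"
    and pole: "s *\<^sub>R (u + v + w) = vector [0, 0, 1]"
  shows "\<exists>a b c. equilateral a b c \<and>
           stereo ` (cube_vertices 0 s u v w - {vector [0, 0, 1], - vector [0, 0, 1]}) =
             {a, b, c, (a + b) / 2, (b + c) / 2, (c + a) / 2}"
proof -
  define p1 where "p1 = s *\<^sub>R (-u + v + w)"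
  define p2 where "p2 = s *\<^sub>R (u - v + w)"
  define p3 where "p3 = s *\<^sub>R (u + v - w)"
  note inners = orthonormal_tripleD[OF orth]
  have height_eq: "(s *\<^sub>R x)$3 = s\<^sup>2 * inner x (u + v + w)" for x
    by (simp add: power2_eq_square flip: inner_vector_0_0_1 pole)
  have "inner (-u + v + w) (u + v + w) = 1" "inner (u - v + w) (u + v + w) = 1"
    "inner (u + v - w) (u + v + w) = 1"
    using inners by (simp_all add: inner_add inner_diff)
  then have height: "p1$3 = 1/3" "p2$3 = 1/3" "p3$3 = 1/3"
    using \<open>3 * s\<^sup>2 = 1\<close> unfolding p1_def p2_def p3_def height_eq by simp_all
  have "x \<noteq> vector [0, 0, 1] \<and> x \<noteq> - vector [0, 0, 1]"
    if "x \<in> {p1, p2, p3, -p1, -p2, -p3}" for x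
  proof -
    have "x$3 \<in> {1/3, -1/3}" using that height by auto
    then show ?thesis by auto
  qed
  then have vertices: "cube_vertices 0 s u v w - {vector [0, 0, 1], - vector [0, 0, 1]} =
                       {p1, p2, p3, -p1, -p2, -p3}"
    unfolding cube_vertices_centred pole p1_def [symmetric] p2_def [symmetric] p3_def [symmetric]
    by auto
  have "p1 + p2 + p3 = s *\<^sub>R (u + v + w)"
    by (simp add: p1_def p2_def p3_def vec_eq_iff algebra_simps)
  then have balanced: "horiz p1 + horiz p2 + horiz p3 = 0"
    by (simp add: pole flip: horiz_add)
  have "p1 - p2 = (2 * s) *\<^sub>R (v - u)" "p2 - p3 = (2 * s) *\<^sub>R (w - v)"
    "p3 - p1 = (2 * s) *\<^sub>R (u - w)"
    by (simp_all add: p1_def p2_def p3_def vec_eq_iff algebra_simps)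
  then have "dist p1 p2 = \<bar>2 * s\<bar> * norm (v - u)" "dist p2 p3 = \<bar>2 * s\<bar> * norm (w - v)"
    "dist p3 p1 = \<bar>2 * s\<bar> * norm (u - w)"
    by (simp_all only: dist_norm norm_scaleR)
  moreover have "norm (v - u) = sqrt 2" "norm (w - v) = sqrt 2" "norm (u - w) = sqrt 2"
    using inners by (simp_all add: norm_diff_orthonormal)
  moreover have "s \<noteq> 0" using \<open>3 * s\<^sup>2 = 1\<close> by auto
  ultimately have nonzero: "dist p1 p2 \<noteq> 0"
    and equal: "dist p1 p2 = dist p2 p3" "dist p2 p3 = dist p3 p1"
    by simp_all
  from nonzero have "p1 \<noteq> p2" by auto
  then show ?thesis
    unfolding vertices using equal by (rule stereo_image_triangle_one_third[OF height balanced])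
qed

theorem lemma3p8:
  fixes V :: "(real^3) set"
  assumes "is_cube V"
    and "V \<subseteq> sphere 0 1"
    and "vector [0, 0, 1] \<in> V"
    and "vector [0, 0, -1] \<in> V"
  shows "\<exists>a b c. equilateral a b c \<and>
           stereo ` (V - {vector [0, 0, 1], vector [0, 0, -1]}) =
             {a, b, c, (a + b) / 2, (b + c) / 2, (c + a) / 2}"
proof -
  obtain c s u v w where "s > 0" and orth: "orthonormal_triple u v w"
    and V: "V = cube_vertices c s u v w"
    using assms(1) unfolding is_cube_iff by blast
  with assms(2) have "c = 0" "3 * s\<^sup>2 = 1"
    using inscribed_cube_centre_radius by blast+
  obtain a0 b0 d0 where signs: "a0 \<in> {-1, 1}" "b0 \<in> {-1, 1}" "d0 \<in> {-1, 1}"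
    and "vector [0, 0, 1] = c + s *\<^sub>R (a0 *\<^sub>R u + b0 *\<^sub>R v + d0 *\<^sub>R w)"
    using assms(3) unfolding V cube_vertices_def by blast
  then have pole: "s *\<^sub>R (a0 *\<^sub>R u + b0 *\<^sub>R v + d0 *\<^sub>R w) = vector [0, 0, 1]"
    using \<open>c = 0\<close> by simp
  have "V = cube_vertices 0 s (a0 *\<^sub>R u) (b0 *\<^sub>R v) (d0 *\<^sub>R w)"
    unfolding V \<open>c = 0\<close> cube_vertices_scaleR_signs[OF signs] ..
  moreover have "vector [0, 0, -1] = - (vector [0, 0, 1] :: real^3)"
    by (simp add: vec_eq_iff forall_3)
  ultimately show ?thesis
    using stereo_cube_with_pole[OF orthonormal_triple_scaleR_signs[OF orth signs]
        \<open>3 * s\<^sup>2 = 1\<close> pole]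
    by (simp only:)
qed

end
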